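(* Let $s:\mathcal{X}\times\mathcal{Y}\to\mathbb{R}$ be measurable, $S_1,\dots,S_d$ probability distributions on $\mathcal{X}\times\mathcal{Y}$, $f$ a function as described in the context, and $\rho>0$. Let $F_1,\dots,F_d$ be the c.d.f.'s of $s\#S_1,\dots,s\#S_d$ and let $F_{\min}(x)\coloneqq\min_{1\le i\le d}F_i(x)$ (which is a c.d.f.). Define $g_{f,\rho}:[0,1]\to[0,1]$ by $$g_{f,\rho}(\beta)\coloneqq\inf\left\{z\in[0,1] : \beta f\left(\tfrac{z}{\beta}\right)+(1-\beta)f\left(\tfrac{1-z}{1-\beta}\right)\le\rho\right\}$$ and $g_{f,\rho}^{-1}(\tau)\coloneqq\sup\{\beta\in[0,1] : g_{f,\rho}(\beta)\le\tau\}$. Let $$\mathcal{P}_{f,\rho}\coloneqq\{S \text{ a distribution on }\mathbb{R} : \exists S_0\in\mathcal{CH}(s\#S_1,\dots,s\#S_d)\text{ with } D_f(S\Vert S_0)\le\rho\}$$ and $\widetilde{\mathcal{Q}}(\alpha;\mathcal{P}_{f,\rho})\coloneqq\sup_{P\in\mathcal{P}_{f,\rho}}\mathcal{Q}(\alpha;P)$. Then for all $\alpha\in(0,1)$, $$\widetilde{\mathcal{Q}}(\alpha;\mathcal{P}_{f,\rho})=\mathcal{Q}\left(g_{f,\rho}^{-1}(\alpha);F_{\min}\right).$$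
   Context: $f:\mathbb{R}\to\mathbb{R}\cup\{+\infty\}$ is a closed convex function with $f(1)=0$ and $f(t)=+\infty$ for $t<0$. For probability distributions $P\ll Q$, $D_f(P\Vert Q)\coloneqq\int f\left(\frac{dP}{dQ}\right)dQ$. $\mathcal{CH}(P_1,\dots,P_d)\coloneqq\{\sum_{i=1}^d\lambda_iP_i:\lambda_i\ge0,\sum_i\lambda_i=1\}$. $s\#T$ is the push-forward $(s\#T)(A)=T(s^{-1}(A))$. Quantiles: for a distribution $P$ on $\mathbb{R}$, $\mathcal{Q}(\beta;P)\coloneqq\inf\{q : P(S\le q)\ge\beta\}$; for a c.d.f. $F$, $\mathcal{Q}(\beta;F)\coloneqq\inf\{q : F(q)\ge\beta\}$. *)

theory Defs
  imports "HOL-Probability.Probability"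
begin

definition closed_convex_ext :: "(real \<Rightarrow> ereal) \<Rightarrow> bool" where
  "closed_convex_ext f \<longleftrightarrow>
     (\<forall>x. f x \<noteq> -\<infinity>) \<and>
     (\<forall>x y t. 0 \<le> t \<and> t \<le> 1 \<longrightarrow>
        f (t * x + (1 - t) * y) \<le> ereal t * f x + ereal (1 - t) * f y) \<and>
     closed {(x, r). f x \<le> ereal r}"

definition fdiv :: "(real \<Rightarrow> ereal) \<Rightarrow> 'a measure \<Rightarrow> 'a measure \<Rightarrow> ereal" where
  "fdiv f P Q =
     enn2ereal (\<integral>\<^sup>+ x. e2ennreal (f (enn2real (RN_deriv Q P x))) \<partial>Q)
   - enn2ereal (\<integral>\<^sup>+ x. e2ennreal (- f (enn2real (RN_deriv Q P x))) \<partial>Q)"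

definition mixture :: "nat \<Rightarrow> (nat \<Rightarrow> real) \<Rightarrow> (nat \<Rightarrow> real measure) \<Rightarrow> real measure" where
  "mixture d lam P = measure_of UNIV (sets borel)
     (\<lambda>A. \<Sum>i<d. ennreal (lam i) * emeasure (P i) A)"

definition conv_hull_meas :: "nat \<Rightarrow> (nat \<Rightarrow> real measure) \<Rightarrow> real measure set" where
  "conv_hull_meas d P = {mixture d lam P | lam. (\<forall>i<d. 0 \<le> lam i) \<and> (\<Sum>i<d. lam i) = 1}"

text \<open>Quantile of a c.d.f. (extended-real valued: +infinity if the set is empty).\<close>
definition quantile_cdf :: "(real \<Rightarrow> real) \<Rightarrow> real \<Rightarrow> ereal" where
  "quantile_cdf F \<beta> = Inf (ereal ` {q. F q \<ge> \<beta>})"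

definition quantile :: "real measure \<Rightarrow> real \<Rightarrow> ereal" where
  "quantile P \<beta> = quantile_cdf (\<lambda>q. measure P {..q}) \<beta>"

definition g_fun :: "(real \<Rightarrow> ereal) \<Rightarrow> real \<Rightarrow> real \<Rightarrow> real" where
  "g_fun f \<rho> \<beta> = Inf {z \<in> {0..1}.
      ereal \<beta> * f (z / \<beta>) + ereal (1 - \<beta>) * f ((1 - z) / (1 - \<beta>)) \<le> ereal \<rho>}"

definition g_inv :: "(real \<Rightarrow> ereal) \<Rightarrow> real \<Rightarrow> real \<Rightarrow> real" where
  "g_inv f \<rho> \<tau> = Sup {\<beta> \<in> {0<..<1}. g_fun f \<rho> \<beta> \<le> \<tau>}"

definition P_ball :: "(real \<Rightarrow> ereal) \<Rightarrow> real \<Rightarrow> nat \<Rightarrow> (nat \<Rightarrow> real measure) \<Rightarrow> real measure set" where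
  "P_ball f \<rho> d P = {S. prob_space S \<and> sets S = sets borel \<and>
     (\<exists>S0 \<in> conv_hull_meas d P. absolutely_continuous S0 S \<and> fdiv f S S0 \<le> ereal \<rho>)}"

end

theory Submission
  imports Defs
begin

text \<open>
  For an event \<open>A\<close> and \<open>P\<close> absolutely continuous with respect to \<open>Q\<close>, the quantity
  \<open>\<phi>\<^sub>\<beta>(z) = \<beta> f(z/\<beta>) + (1-\<beta>) f((1-z)/(1-\<beta>))\<close> (\<open>bin_div f \<beta> z\<close>) at \<open>\<beta> = Q(A)\<close>,
  \<open>z = P(A)\<close> is a lower bound of \<open>D\<^sub>f(P\<parallel>Q)\<close> (Jensen's inequality on \<open>A\<close> and on its
  complement), and it is attained by a density that is constant on \<open>A\<close> and on its complement.
  Since \<open>\<phi>\<^sub>\<beta>(\<beta>) = 0\<close> and the perspective \<open>(\<beta>, z) \<mapsto> \<beta> f(z/\<beta>)\<close> is jointly convex,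
  the sublevel set \<open>\<phi> \<le> \<rho>\<close> is star-shaped with respect to the diagonal. This makes
  \<open>g\<^sup>-\<^sup>1(\<alpha>)\<close> a sharp threshold: for \<open>\<beta> \<ge> g\<^sup>-\<^sup>1(\<alpha>)\<close>, \<open>\<phi>\<^sub>\<beta>(z) \<le> \<rho>\<close> forces
  \<open>z \<ge> \<alpha>\<close>, while for \<open>0 < \<beta> < g\<^sup>-\<^sup>1(\<alpha>)\<close> some \<open>z < \<alpha>\<close> has \<open>\<phi>\<^sub>\<beta>(z) \<le> \<rho>\<close>.
  Apply this to \<open>A = {S \<le> q}\<close>: the c.d.f. of a mixture of the \<open>s#S\<^sub>i\<close> dominates
  \<open>F\<^sub>m\<^sub>i\<^sub>n\<close>, with equality for a component attaining the minimum, so the worst-case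
  \<open>\<alpha>\<close>-quantile is the \<open>g\<^sup>-\<^sup>1(\<alpha>)\<close>-quantile of \<open>F\<^sub>m\<^sub>i\<^sub>n\<close>.
\<close>

subsection \<open>Convex functions with values in the extended reals\<close>

lemma closed_convex_ext_not_minf: "closed_convex_ext f \<Longrightarrow> f x \<noteq> -\<infinity>"
  unfolding closed_convex_ext_def by blast

lemma closed_convex_ext_convex_comb:
  assumes "closed_convex_ext f" "0 \<le> t" "t \<le> 1" "f x = ereal a" "f y = ereal b"
  shows "f (t * x + (1 - t) * y) \<le> ereal (t * a + (1 - t) * b)"
proof -
  have "f (t * x + (1 - t) * y) \<le> ereal t * f x + ereal (1 - t) * f y"
    using assms(1-3) unfolding closed_convex_ext_def by blast
  then show ?thesis
    using assms(4,5) by simp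
qed

lemma closed_convex_ext_slope_mono:
  assumes cvx: "closed_convex_ext f" and st: "s < t0" "t0 < t"
    and vals: "f s = ereal a" "f t0 = ereal c" "f t = ereal b"
  shows "(c - a) / (t0 - s) \<le> (b - c) / (t - t0)"
proof -
  define l where "l = (t - t0) / (t - s)"
  have l: "0 \<le> l" "l \<le> 1"
    using st by (auto simp: l_def)
  have "t0 = l * s + (1 - l) * t"
    using st by (simp add: l_def divide_simps) (simp add: algebra_simps)
  then have "c \<le> l * a + (1 - l) * b"
    using closed_convex_ext_convex_comb[OF cvx l vals(1,3)] vals(2) by simp
  then have "c * (t - s) \<le> (l * a + (1 - l) * b) * (t - s)"
    using st by (intro mult_right_mono) auto
  also have "\<dots> = (t - t0) * a + (t0 - s) * b"
    using st by (simp add: l_def divide_simps)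
  finally have "(c - a) * (t - t0) \<le> (b - c) * (t0 - s)"
    by (simp add: algebra_simps)
  then show ?thesis
    using st by (simp add: divide_simps)
qed

lemma closed_convex_ext_finite_between:
  assumes cvx: "closed_convex_ext f" and t: "t1 < t0" "t0 < t2" "f t1 \<noteq> \<infinity>" "f t2 \<noteq> \<infinity>"
  shows "f t0 \<noteq> \<infinity>"
proof -
  obtain a b where ab: "f t1 = ereal a" "f t2 = ereal b"
    using t(3,4) closed_convex_ext_not_minf[OF cvx] by (meson ereal_cases)
  define l where "l = (t2 - t0) / (t2 - t1)"
  have l: "0 \<le> l" "l \<le> 1"
    using t by (auto simp: l_def)
  have "t0 = l * t1 + (1 - l) * t2"
    using t by (simp add: l_def divide_simps) (simp add: algebra_simps)
  then show ?thesis
    using closed_convex_ext_convex_comb[OF cvx l ab] by auto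
qed

lemma closed_convex_ext_supporting_line:
  assumes cvx: "closed_convex_ext f" and t: "t1 < t0" "t0 < t2" "f t1 \<noteq> \<infinity>" "f t2 \<noteq> \<infinity>"
  obtains c a where "f t0 = ereal c" "\<And>t. ereal (c + a * (t - t0)) \<le> f t"
proof -
  define fr where "fr x = real_of_ereal (f x)" for x
  have fr: "f x = ereal (fr x)" if "f x \<noteq> \<infinity>" for x
    using that closed_convex_ext_not_minf[OF cvx, of x] unfolding fr_def by (cases "f x") auto
  define c where "c = fr t0"
  have fc: "f t0 = ereal c"
    using fr[OF closed_convex_ext_finite_between[OF cvx t]] by (simp add: c_def)
  have slope: "(c - fr s) / (t0 - s) \<le> (fr u - c) / (u - t0)"
    if "s < t0" "f s \<noteq> \<infinity>" "t0 < u" "f u \<noteq> \<infinity>" for s u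
    using closed_convex_ext_slope_mono[OF cvx that(1,3) fr[OF that(2)] fc fr[OF that(4)]] .
  define SL where "SL = {(c - fr s) / (t0 - s) | s. s < t0 \<and> f s \<noteq> \<infinity>}"
  have SL_ne: "SL \<noteq> {}"
    using t by (auto simp: SL_def)
  have SL_bdd: "bdd_above SL"
    using slope t by (auto simp: SL_def intro!: bdd_aboveI[of _ "(fr t2 - c) / (t2 - t0)"])
  define a where "a = Sup SL"
  have "ereal (c + a * (x - t0)) \<le> f x" for x
  proof (cases "f x = \<infinity>")
    case False
    consider "x < t0" | "x = t0" | "t0 < x"
      by linarith
    then show ?thesis
    proof cases
      case 1
      then have "(c - fr x) / (t0 - x) \<le> a"
        unfolding a_def using False by (intro cSup_upper[OF _ SL_bdd]) (auto simp: SL_def)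
      then show ?thesis
        using 1 fr[OF False] by (simp add: field_simps)
    next
      case 3
      then have "a \<le> (fr x - c) / (x - t0)"
        unfolding a_def using slope False by (intro cSup_least[OF SL_ne]) (auto simp: SL_def)
      then show ?thesis
        using 3 fr[OF False] by (simp add: field_simps)
    qed (simp add: fc)
  qed simp
  then show thesis
    using fc that by blast
qed

subsection \<open>The binary f-divergence\<close>

text \<open>\<open>bin_div f \<beta> z\<close> is the f-divergence of the Bernoulli law with parameter \<open>z\<close>
  from the one with parameter \<open>\<beta>\<close>.\<close>

definition bin_div :: "(real \<Rightarrow> ereal) \<Rightarrow> real \<Rightarrow> real \<Rightarrow> ereal" where
  "bin_div f \<beta> z = ereal \<beta> * f (z / \<beta>) + ereal (1 - \<beta>) * f ((1 - z) / (1 - \<beta>))"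

lemma bin_div_self: "f 1 = 0 \<Longrightarrow> bin_div f \<beta> \<beta> = 0"
  by (cases "\<beta> = 0 \<or> \<beta> = 1") (auto simp: bin_div_def)

lemma bin_div_le_finiteE:
  assumes cvx: "closed_convex_ext f" and le: "bin_div f \<beta> z \<le> ereal \<rho>" and \<beta>: "0 < \<beta>" "\<beta> < 1"
  obtains u v where "f (z / \<beta>) = ereal u" "f ((1 - z) / (1 - \<beta>)) = ereal v"
    "\<beta> * u + (1 - \<beta>) * v \<le> \<rho>"
proof -
  have "f (z / \<beta>) \<noteq> \<infinity> \<and> f ((1 - z) / (1 - \<beta>)) \<noteq> \<infinity>"
    using le \<beta> closed_convex_ext_not_minf[OF cvx]
    by (cases "f (z / \<beta>)"; cases "f ((1 - z) / (1 - \<beta>))") (auto simp: bin_div_def)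
  then obtain u v where uv: "f (z / \<beta>) = ereal u" "f ((1 - z) / (1 - \<beta>)) = ereal v"
    using closed_convex_ext_not_minf[OF cvx] by (meson ereal_cases)
  moreover have "\<beta> * u + (1 - \<beta>) * v \<le> \<rho>"
    using le uv by (simp add: bin_div_def)
  ultimately show thesis
    using that by blast
qed

lemma perspective_convex_comb_diag:
  assumes cvx: "closed_convex_ext f" and f1: "f 1 = 0" and fz: "f (z / \<beta>) = ereal u"
    and pos: "0 < \<beta>" "0 < c" and t: "0 \<le> t" "t \<le> 1"
  shows "ereal (t * \<beta> + (1 - t) * c) * f ((t * z + (1 - t) * c) / (t * \<beta> + (1 - t) * c))
    \<le> ereal (t * \<beta> * u)"
proof -
  define b where "b = t * \<beta> + (1 - t) * c"
  have b: "0 < b"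
    using pos t by (cases "t = 0") (auto simp: b_def add_pos_nonneg)
  define \<mu> where "\<mu> = t * \<beta> / b"
  have \<mu>: "0 \<le> \<mu>" "\<mu> \<le> 1"
    using b pos t by (auto simp: \<mu>_def b_def)
  have "\<mu> * (z / \<beta>) + (1 - \<mu>) * 1 = (t * z + (b - t * \<beta>)) / b"
    using b pos by (simp add: \<mu>_def field_simps)
  also have "b - t * \<beta> = (1 - t) * c"
    by (simp add: b_def)
  finally have "(t * z + (1 - t) * c) / b = \<mu> * (z / \<beta>) + (1 - \<mu>) * 1" ..
  then have "f ((t * z + (1 - t) * c) / b) \<le> ereal (\<mu> * u)"
    using closed_convex_ext_convex_comb[OF cvx \<mu> fz, of 1 0] f1 by (simp add: zero_ereal_def)
  then have "ereal b * f ((t * z + (1 - t) * c) / b) \<le> ereal b * ereal (\<mu> * u)"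
    using b by (intro ereal_mult_left_mono) auto
  also have "\<dots> = ereal (t * \<beta> * u)"
    using b by (simp add: \<mu>_def)
  finally show ?thesis
    unfolding b_def .
qed

lemma bin_div_convex_comb_diag:
  assumes cvx: "closed_convex_ext f" and f1: "f 1 = 0" and le: "bin_div f \<beta> z \<le> ereal \<rho>"
    and \<beta>: "0 < \<beta>" "\<beta> < 1" and c: "0 < c" "c < 1" and t: "0 \<le> t" "t \<le> 1" and \<rho>: "0 \<le> \<rho>"
  shows "bin_div f (t * \<beta> + (1 - t) * c) (t * z + (1 - t) * c) \<le> ereal \<rho>"
proof -
  obtain u v where uv: "f (z / \<beta>) = ereal u" "f ((1 - z) / (1 - \<beta>)) = ereal v"
    and le_uv: "\<beta> * u + (1 - \<beta>) * v \<le> \<rho>"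
    using bin_div_le_finiteE[OF cvx le \<beta>] .
  have compl: "1 - (t * x + (1 - t) * c) = t * (1 - x) + (1 - t) * (1 - c)" for x
    by (simp add: algebra_simps)
  have "bin_div f (t * \<beta> + (1 - t) * c) (t * z + (1 - t) * c)
      \<le> ereal (t * \<beta> * u) + ereal (t * (1 - \<beta>) * v)"
    unfolding bin_div_def compl
    using perspective_convex_comb_diag[OF cvx f1 uv(1) \<beta>(1) c(1) t]
      perspective_convex_comb_diag[OF cvx f1 uv(2), of "1 - c" t] \<beta> c t
    by (intro add_mono) auto
  also have "\<dots> \<le> ereal \<rho>"
  proof (cases "0 \<le> \<beta> * u + (1 - \<beta>) * v")
    case True
    then have "t * (\<beta> * u + (1 - \<beta>) * v) \<le> \<beta> * u + (1 - \<beta>) * v"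
      using t by (intro mult_left_le_one_le)
    then show ?thesis
      using le_uv by (simp add: algebra_simps)
  next
    case False
    then have "t * (\<beta> * u + (1 - \<beta>) * v) \<le> 0"
      using t by (simp add: mult_nonneg_nonpos)
    then show ?thesis
      using \<rho> by (simp add: algebra_simps)
  qed
  finally show ?thesis .
qed

lemma g_fun_bin_div: "g_fun f \<rho> \<beta> = Inf {z \<in> {0..1}. bin_div f \<beta> z \<le> ereal \<rho>}"
  unfolding g_fun_def bin_div_def ..

lemma g_fun_le: "z \<in> {0..1} \<Longrightarrow> bin_div f \<beta> z \<le> ereal \<rho> \<Longrightarrow> g_fun f \<rho> \<beta> \<le> z"
  unfolding g_fun_bin_div by (rule cInf_lower) (auto intro: bdd_belowI[of _ 0])

lemma g_fun_le_self: "f 1 = 0 \<Longrightarrow> \<beta> \<in> {0..1} \<Longrightarrow> 0 \<le> \<rho> \<Longrightarrow> g_fun f \<rho> \<beta> \<le> \<beta>"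
  by (rule g_fun_le) (auto simp: bin_div_self)

lemma g_fun_lessE:
  assumes "f 1 = 0" "\<beta> \<in> {0..1}" "0 \<le> \<rho>" "g_fun f \<rho> \<beta> < c"
  obtains z where "z \<in> {0..1}" "bin_div f \<beta> z \<le> ereal \<rho>" "z < c"
proof -
  have "\<beta> \<in> {z \<in> {0..1}. bin_div f \<beta> z \<le> ereal \<rho>}"
    using assms by (simp add: bin_div_self)
  then have "\<exists>z \<in> {z \<in> {0..1}. bin_div f \<beta> z \<le> ereal \<rho>}. z < c"
    using assms(4) unfolding g_fun_bin_div by (intro cInf_lessD) auto
  then show thesis
    using that by blast
qed

lemma le_g_inv: "f 1 = 0 \<Longrightarrow> 0 < \<alpha> \<Longrightarrow> \<alpha> < 1 \<Longrightarrow> 0 \<le> \<rho> \<Longrightarrow> \<alpha> \<le> g_inv f \<rho> \<alpha>"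
  unfolding g_inv_def by (rule cSup_upper) (auto simp: g_fun_le_self intro: bdd_aboveI[of _ 1])

lemma g_inv_le_one: "f 1 = 0 \<Longrightarrow> 0 < \<alpha> \<Longrightarrow> \<alpha> < 1 \<Longrightarrow> 0 \<le> \<rho> \<Longrightarrow> g_inv f \<rho> \<alpha> \<le> 1"
  unfolding g_inv_def by (rule cSup_least) (auto intro!: exI[of _ \<alpha>] g_fun_le_self)

lemma less_g_fun_of_g_inv_less:
  assumes "g_inv f \<rho> \<alpha> < \<beta>" "0 < \<beta>" "\<beta> < 1"
  shows "\<alpha> < g_fun f \<rho> \<beta>"
proof (rule ccontr)
  assume "\<not> \<alpha> < g_fun f \<rho> \<beta>"
  then have "\<beta> \<le> g_inv f \<rho> \<alpha>"
    unfolding g_inv_def using assms(2,3) by (intro cSup_upper) (auto intro: bdd_aboveI[of _ 1])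
  then show False
    using assms(1) by simp
qed

lemma less_g_invE:
  assumes "f 1 = 0" "0 < \<alpha>" "\<alpha> < 1" "0 \<le> \<rho>" "b < g_inv f \<rho> \<alpha>"
  obtains \<beta> where "b < \<beta>" "0 < \<beta>" "\<beta> < 1" "g_fun f \<rho> \<beta> \<le> \<alpha>"
proof -
  have "\<alpha> \<in> {\<beta> \<in> {0<..<1}. g_fun f \<rho> \<beta> \<le> \<alpha>}"
    using assms(1-4) by (simp add: g_fun_le_self)
  then have "\<exists>\<beta> \<in> {\<beta> \<in> {0<..<1}. g_fun f \<rho> \<beta> \<le> \<alpha>}. b < \<beta>"
    using assms(5) unfolding g_inv_def by (intro less_cSupD) auto
  then show thesis
    using that by auto
qed

lemma ge_of_bin_div_le:
  assumes cvx: "closed_convex_ext f" and f1: "f 1 = 0" and \<alpha>: "0 < \<alpha>" "\<alpha> < 1" and \<rho>: "0 \<le> \<rho>"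
    and \<beta>: "g_inv f \<rho> \<alpha> \<le> \<beta>" "\<beta> < 1" and z: "0 \<le> z" "z \<le> 1"
    and le: "bin_div f \<beta> z \<le> ereal \<rho>"
  shows "\<alpha> \<le> z"
proof (rule ccontr)
  txt \<open>Mixing \<open>(\<beta>, z)\<close> with a diagonal point slightly above \<open>\<beta>\<close> would give
    a \<open>\<beta>' > g_inv f \<rho> \<alpha>\<close> with \<open>g_fun f \<rho> \<beta>' < \<alpha>\<close>.\<close>
  assume "\<not> \<alpha> \<le> z"
  have \<beta>0: "0 < \<beta>"
    using le_g_inv[of f \<alpha> \<rho>, OF f1 \<alpha> \<rho>] \<alpha> \<beta> by linarith
  define c where "c = (1 + \<beta>) / 2"
  define t where "t = 1 - (\<alpha> - z) / 2"
  have c: "\<beta> < c" "c < 1"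
    using \<beta> by (auto simp: c_def)
  have t: "0 \<le> t" "t < 1"
    using \<open>\<not> \<alpha> \<le> z\<close> z \<alpha> by (auto simp: t_def)
  define \<beta>' where "\<beta>' = t * \<beta> + (1 - t) * c"
  define z' where "z' = t * z + (1 - t) * c"
  have "bin_div f \<beta>' z' \<le> ereal \<rho>"
    unfolding \<beta>'_def z'_def
    using bin_div_convex_comb_diag[OF cvx f1 le \<beta>0 \<beta>(2) _ c(2) t(1) _ \<rho>] \<beta>0 c t by simp
  moreover have "0 \<le> z'" "z' \<le> 1"
    using t c z \<beta>0 unfolding z'_def by (auto intro: convex_bound_le)
  ultimately have "g_fun f \<rho> \<beta>' \<le> z'"
    by (intro g_fun_le) auto
  moreover have "z' < \<alpha>"
  proof -
    have "(1 - t) * (c - z) \<le> (1 - t) * 1"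
      using t c z by (intro mult_left_mono) auto
    also have "\<dots> < \<alpha> - z"
      using \<open>\<not> \<alpha> \<le> z\<close> by (simp add: t_def)
    finally show ?thesis
      by (simp add: z'_def algebra_simps)
  qed
  moreover have "\<beta> < \<beta>'" "\<beta>' < 1"
  proof -
    have "0 < (1 - t) * (c - \<beta>)"
      using t c by simp
    then show "\<beta> < \<beta>'"
      by (simp add: \<beta>'_def algebra_simps)
    show "\<beta>' < 1"
      using t c \<beta> unfolding \<beta>'_def by (intro convex_bound_lt) auto
  qed
  then have "\<alpha> < g_fun f \<rho> \<beta>'"
    using \<beta> \<beta>0 by (intro less_g_fun_of_g_inv_less) auto
  ultimately show False
    by simp
qed

lemma less_g_inv_bin_div_leE:
  assumes cvx: "closed_convex_ext f" and f1: "f 1 = 0" and \<alpha>: "0 < \<alpha>" "\<alpha> < 1" and \<rho>: "0 \<le> \<rho>"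
    and b: "0 < b" "b < g_inv f \<rho> \<alpha>"
  obtains z where "0 \<le> z" "z \<le> 1" "z < \<alpha>" "bin_div f b z \<le> ereal \<rho>"
proof -
  txt \<open>Write \<open>b\<close> as a mixture of some \<open>\<beta> > b\<close> with \<open>g_fun f \<rho> \<beta> \<le> \<alpha>\<close> and a
    diagonal point \<open>c < \<alpha>\<close>.\<close>
  obtain \<beta> where \<beta>: "b < \<beta>" "0 < \<beta>" "\<beta> < 1" "g_fun f \<rho> \<beta> \<le> \<alpha>"
    using less_g_invE[of f \<alpha> \<rho> b, OF f1 \<alpha> \<rho> b(2)] .
  define c where "c = min b \<alpha> / 2"
  have c: "0 < c" "c < b" "c < \<alpha>"
    using b \<alpha> by (auto simp: c_def)
  define t where "t = (b - c) / (\<beta> - c)"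
  have t: "0 < t" "t < 1"
    using c \<beta> by (auto simp: t_def)
  have b_eq: "b = t * \<beta> + (1 - t) * c"
  proof -
    have "t * (\<beta> - c) = b - c"
      using c \<beta> by (simp add: t_def)
    then show ?thesis
      by (simp add: algebra_simps)
  qed
  define \<theta> where "\<theta> = \<alpha> + (1 - t) * (\<alpha> - c) / t"
  have "\<alpha> < \<theta>"
    using t c by (simp add: \<theta>_def)
  then obtain z' where z': "z' \<in> {0..1}" "bin_div f \<beta> z' \<le> ereal \<rho>" "z' < \<theta>"
    using g_fun_lessE[of f \<beta> \<rho> \<theta>] f1 \<rho> \<beta> by auto
  define z where "z = t * z' + (1 - t) * c"
  show thesis
  proof (rule that)
    show "0 \<le> z" "z \<le> 1"
      using t c z' \<alpha> unfolding z_def by (auto intro: convex_bound_le)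
    have "t * z' < t * \<theta>"
      using t z' by simp
    also have "t * \<theta> = t * \<alpha> + (1 - t) * (\<alpha> - c)"
      using t by (simp add: \<theta>_def field_simps)
    finally show "z < \<alpha>"
      by (simp add: z_def algebra_simps)
    show "bin_div f b z \<le> ereal \<rho>"
      unfolding b_eq z_def using \<beta> c t \<alpha>
      by (intro bin_div_convex_comb_diag[OF cvx f1 z'(2)] \<rho>) auto
  qed
qed

lemma less_g_inv_density_levelsE:
  assumes cvx: "closed_convex_ext f" and f1: "f 1 = 0" and \<alpha>: "0 < \<alpha>" "\<alpha> < 1" and \<rho>: "0 \<le> \<rho>"
    and b: "0 \<le> b" "b < g_inv f \<rho> \<alpha>"
  obtains c1 c2 u v where "0 \<le> c1" "0 \<le> c2" "c1 * b + c2 * (1 - b) = 1"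
    "f c1 = ereal u" "f c2 = ereal v" "b * u + (1 - b) * v \<le> \<rho>" "c1 * b < \<alpha>"
proof (cases "b = 0")
  case True
  show thesis
    by (rule that[of 1 1 0 0]) (use True f1 \<alpha> \<rho> in \<open>simp_all add: zero_ereal_def\<close>)
next
  case False
  then have b_pos: "0 < b"
    using b(1) by simp
  have b_less: "b < 1"
    using b(2) g_inv_le_one[of f \<alpha> \<rho>, OF f1 \<alpha> \<rho>] by simp
  obtain z where z: "0 \<le> z" "z \<le> 1" "z < \<alpha>" "bin_div f b z \<le> ereal \<rho>"
    using less_g_inv_bin_div_leE[OF cvx f1 \<alpha> \<rho> b_pos b(2)] .
  obtain u v where "f (z / b) = ereal u" "f ((1 - z) / (1 - b)) = ereal v" "b * u + (1 - b) * v \<le> \<rho>"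
    using bin_div_le_finiteE[OF cvx z(4) b_pos b_less] .
  then show thesis
    using that[of "z / b" "(1 - z) / (1 - b)" u v] z b_pos b_less by simp
qed

subsection \<open>Mixtures\<close>

lemma sets_mixture [simp]: "sets (mixture d lam P) = sets borel"
  unfolding mixture_def by (metis sets_measure_of_conv sets.sigma_sets_eq space_borel sets.space_closed)

lemma space_mixture [simp]: "space (mixture d lam P) = UNIV"
  unfolding mixture_def by (simp add: space_measure_of_conv)

lemma emeasure_mixture:
  assumes P: "\<And>i. i < d \<Longrightarrow> sets (P i) = sets borel" and A: "A \<in> sets borel"
  shows "emeasure (mixture d lam P) A = (\<Sum>i<d. ennreal (lam i) * emeasure (P i) A)"
  unfolding mixture_def
proof (rule emeasure_measure_of_sigma)
  show "sigma_algebra UNIV (sets borel :: real set set)"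
    by (metis sets.sigma_algebra_axioms space_borel)
  show "positive (sets borel) (\<lambda>A. \<Sum>i<d. ennreal (lam i) * emeasure (P i) A)"
    by (simp add: positive_def)
  show "countably_additive (sets borel) (\<lambda>A. \<Sum>i<d. ennreal (lam i) * emeasure (P i) A)"
    unfolding countably_additive_def
  proof (intro allI impI)
    fix F :: "nat \<Rightarrow> real set"
    assume F: "range F \<subseteq> sets borel" "disjoint_family F"
    have "(\<Sum>n. \<Sum>i<d. ennreal (lam i) * emeasure (P i) (F n))
        = (\<Sum>i<d. \<Sum>n. ennreal (lam i) * emeasure (P i) (F n))"
      by (rule suminf_sum) (rule summableI)
    also have "\<dots> = (\<Sum>i<d. ennreal (lam i) * emeasure (P i) (\<Union> (range F)))"
      using F P by (intro sum.cong refl) (auto simp: suminf_emeasure)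
    finally show "(\<Sum>n. \<Sum>i<d. ennreal (lam i) * emeasure (P i) (F n))
        = (\<Sum>i<d. ennreal (lam i) * emeasure (P i) (\<Union> (range F)))" .
  qed
qed (use A in auto)

lemma emeasure_mixture_prob:
  assumes P: "\<And>i. i < d \<Longrightarrow> prob_space (P i)" "\<And>i. i < d \<Longrightarrow> sets (P i) = sets borel"
    and lam: "\<And>i. i < d \<Longrightarrow> 0 \<le> lam i" and A: "A \<in> sets borel"
  shows "emeasure (mixture d lam P) A = ennreal (\<Sum>i<d. lam i * measure (P i) A)"
proof -
  have "emeasure (mixture d lam P) A = (\<Sum>i<d. ennreal (lam i) * emeasure (P i) A)"
    using P(2) A by (rule emeasure_mixture)
  also have "\<dots> = (\<Sum>i<d. ennreal (lam i * measure (P i) A))"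
    using P(1) lam by (intro sum.cong refl) (simp add: ennreal_mult finite_measure.emeasure_eq_measure[OF prob_space.axioms(1)])
  also have "\<dots> = ennreal (\<Sum>i<d. lam i * measure (P i) A)"
    using lam by (intro sum_ennreal) auto
  finally show ?thesis .
qed

lemma measure_mixture:
  assumes "\<And>i. i < d \<Longrightarrow> prob_space (P i)" "\<And>i. i < d \<Longrightarrow> sets (P i) = sets borel"
    and "\<And>i. i < d \<Longrightarrow> 0 \<le> lam i" and "A \<in> sets borel"
  shows "measure (mixture d lam P) A = (\<Sum>i<d. lam i * measure (P i) A)"
  using emeasure_mixture_prob[OF assms] assms(3)
  by (intro measure_eq_emeasure_eq_ennreal sum_nonneg) auto

lemma prob_space_mixture:
  assumes P: "\<And>i. i < d \<Longrightarrow> prob_space (P i)" "\<And>i. i < d \<Longrightarrow> sets (P i) = sets borel"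
    and lam: "\<And>i. i < d \<Longrightarrow> 0 \<le> lam i" "(\<Sum>i<d. lam i) = 1"
  shows "prob_space (mixture d lam P)"
proof (rule prob_spaceI)
  have "measure (P i) UNIV = 1" if "i < d" for i
    using prob_space.prob_space[OF P(1)[OF that]] sets_eq_imp_space_eq[OF P(2)[OF that]] by simp
  then show "emeasure (mixture d lam P) (space (mixture d lam P)) = 1"
    using emeasure_mixture_prob[OF P lam(1), where A = UNIV] lam(2) by simp
qed

subsection \<open>Data processing for a set and its complement\<close>

lemma AE_not_in_of_nn_integral_finite:
  assumes fin: "(\<integral>\<^sup>+x. e2ennreal (k x) \<partial>M) < \<infinity>" and N: "N \<in> sets M"
    and inf: "\<And>x. x \<in> N \<Longrightarrow> k x = \<infinity>"
  shows "AE x in M. x \<notin> N"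
proof -
  have "\<infinity> * emeasure M N = (\<integral>\<^sup>+x. \<infinity> * indicator N x \<partial>M)"
    using N by (simp add: nn_integral_cmult_indicator)
  also have "\<dots> \<le> (\<integral>\<^sup>+x. e2ennreal (k x) \<partial>M)"
    by (intro nn_integral_mono) (auto simp: indicator_def inf)
  finally have "emeasure M N = 0"
    using fin by (cases "emeasure M N = 0") (auto simp: ennreal_top_mult top_unique)
  then show ?thesis
    using N by (intro AE_not_in) (simp add: null_sets_def)
qed

lemma integral_le_pos_minus_neg_nn_integral:
  fixes l :: "'a \<Rightarrow> real" and k :: "'a \<Rightarrow> ereal"
  assumes l: "integrable M l" and le: "AE x in M. ereal (l x) \<le> k x"
  shows "ereal (integral\<^sup>L M l)
    \<le> enn2ereal (\<integral>\<^sup>+ x. e2ennreal (k x) \<partial>M) - enn2ereal (\<integral>\<^sup>+ x. e2ennreal (- k x) \<partial>M)"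
proof -
  obtain r q where rq: "0 \<le> r" "0 \<le> q" "(\<integral>\<^sup>+x. ennreal (l x) \<partial>M) = ennreal r"
    "(\<integral>\<^sup>+x. ennreal (- l x) \<partial>M) = ennreal q" "integral\<^sup>L M l = r - q"
    using integrableE[OF l] by metis
  have "ennreal r \<le> (\<integral>\<^sup>+ x. e2ennreal (k x) \<partial>M)"
    unfolding rq(3)[symmetric] using le
    by (intro nn_integral_mono_AE) (auto elim!: eventually_mono intro: e2ennreal_mono[of "ereal _", simplified])
  moreover have "(\<integral>\<^sup>+ x. e2ennreal (- k x) \<partial>M) \<le> ennreal q"
    unfolding rq(4)[symmetric] using le
  proof (intro nn_integral_mono_AE, eventually_elim)
    case (elim x)
    then have "- k x \<le> ereal (- l x)"
      by (metis ereal_minus_le_minus ereal_uminus_uminus uminus_ereal.simps(1))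
    then show ?case
      using e2ennreal_mono by fastforce
  qed
  ultimately have "ereal r - ereal q
      \<le> enn2ereal (\<integral>\<^sup>+ x. e2ennreal (k x) \<partial>M) - enn2ereal (\<integral>\<^sup>+ x. e2ennreal (- k x) \<partial>M)"
    using rq(1,2) by (intro ereal_minus_mono) (auto simp: less_eq_ennreal.rep_eq)
  then show ?thesis
    by (simp add: rq(5))
qed

lemma has_bochner_integral_affine_indicator:
  fixes h :: "'a \<Rightarrow> real"
  assumes B: "B \<in> sets M" "emeasure M B < \<infinity>" and h: "integrable M h"
    and mean: "(\<integral>x. h x * indicator B x \<partial>M) = t * measure M B"
  shows "has_bochner_integral M (\<lambda>x. (c + a * (h x - t)) * indicator B x) (measure M B * c)"
proof -
  have "has_bochner_integral M (\<lambda>x. (c - a * t) * indicator B x + a * (h x * indicator B x))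
      ((c - a * t) * measure M B + a * (t * measure M B))"
    using has_bochner_integral_integrable[OF integrable_real_mult_indicator[OF B(1) h]] mean
    by (intro has_bochner_integral_add has_bochner_integral_mult_right
        has_bochner_integral_real_indicator B) simp
  then show ?thesis
    by (rule has_bochner_integral_cong[THEN iffD1, rotated -1]) (auto simp: algebra_simps)
qed

lemma (in finite_measure) AE_eq_on_of_one_sided:
  fixes h :: "'a \<Rightarrow> real"
  assumes B: "B \<in> sets M" and h: "integrable M h"
    and mean: "(\<integral>x. h x * indicator B x \<partial>M) = t * measure M B"
    and \<sigma>: "\<sigma> \<noteq> 0" and side: "AE x in M. x \<in> B \<longrightarrow> 0 \<le> \<sigma> * (h x - t)"
  shows "AE x in M. x \<in> B \<longrightarrow> h x = t"
proof -
  define g where "g x = \<sigma> * ((h x - t) * indicator B x)" for x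
  have "has_bochner_integral M (\<lambda>x. (0 + 1 * (h x - t)) * indicator B x) (measure M B * 0)"
    using B h mean by (intro has_bochner_integral_affine_indicator) (auto simp: less_top[symmetric])
  then have "has_bochner_integral M g 0"
    unfolding g_def using has_bochner_integral_mult_right[of \<sigma> M _ 0] by simp
  moreover have nonneg: "AE x in M. 0 \<le> g x"
    using side by eventually_elim (auto simp: g_def indicator_def)
  ultimately have "AE x in M. g x = 0"
    using integral_nonneg_eq_0_iff_AE[of M g] by (simp add: has_bochner_integral_iff)
  then show ?thesis
    by eventually_elim (use \<sigma> in \<open>auto simp: g_def indicator_def\<close>)
qed

lemma (in prob_space) AE_eq_mean_at_domain_endpoint:
  assumes B: "B \<in> sets M" "0 < prob B" and h: "integrable M h"
    and mean: "(\<integral>x. h x * indicator B x \<partial>M) = t * prob B"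
    and fin: "(\<integral>\<^sup>+x. e2ennreal (f (h x)) \<partial>M) < \<infinity>"
    and \<sigma>: "\<sigma> \<noteq> 0" "\<And>s. \<sigma> * (s - t) < 0 \<Longrightarrow> f s = \<infinity>"
  shows "AE x in M. x \<in> B \<longrightarrow> h x = t" and "f t \<noteq> \<infinity>"
proof -
  have [measurable]: "h \<in> borel_measurable M"
    using h by (rule borel_measurable_integrable)
  txt \<open>Finiteness of the integral keeps \<open>h\<close> on the domain side of \<open>t\<close> on \<open>B\<close>, and
    \<open>t\<close> is the mean of \<open>h\<close> on \<open>B\<close>.\<close>
  have "AE x in M. x \<notin> {x \<in> space M. x \<in> B \<and> \<sigma> * (h x - t) < 0}"
    using B(1) by (intro AE_not_in_of_nn_integral_finite[OF fin]) (auto simp: \<sigma>(2))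
  with AE_space have "AE x in M. x \<in> B \<longrightarrow> 0 \<le> \<sigma> * (h x - t)"
    by eventually_elim auto
  then show on_B: "AE x in M. x \<in> B \<longrightarrow> h x = t"
    by (rule AE_eq_on_of_one_sided[OF B(1) h mean \<sigma>(1)])
  show "f t \<noteq> \<infinity>"
  proof
    assume "f t = \<infinity>"
    then have "AE x in M. x \<notin> {x \<in> space M. x \<in> B \<and> h x = t}"
      using B(1) by (intro AE_not_in_of_nn_integral_finite[OF fin]) auto
    with on_B AE_space have "AE x in M. x \<notin> B"
      by eventually_elim auto
    then have "emeasure M B = 0"
      using AE_iff_measurable[OF B(1), of "\<lambda>x. x \<notin> B"] B(1) sets.sets_into_space by auto
    then show False
      using B(2) by (simp add: emeasure_eq_measure)
  qed
qed

lemma (in prob_space) affine_minorant_on_set: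
  assumes cvx: "closed_convex_ext f" and B: "B \<in> sets M" "0 < prob B" and h: "integrable M h"
    and fin: "(\<integral>\<^sup>+x. e2ennreal (f (h x)) \<partial>M) < \<infinity>"
  defines "t \<equiv> (\<integral>x. h x * indicator B x \<partial>M) / prob B"
  obtains c a where "f t = ereal c" "AE x in M. x \<in> B \<longrightarrow> ereal (c + a * (h x - t)) \<le> f (h x)"
proof -
  have mean: "(\<integral>x. h x * indicator B x \<partial>M) = t * prob B"
    using B by (simp add: t_def)
  consider (interior) t1 t2 where "t1 < t" "t < t2" "f t1 \<noteq> \<infinity>" "f t2 \<noteq> \<infinity>"
    | (endpoint) \<sigma> :: real where "\<sigma> \<noteq> 0" "\<And>s. \<sigma> * (s - t) < 0 \<Longrightarrow> f s = \<infinity>"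
  proof (cases "\<exists>t1 t2. t1 < t \<and> t < t2 \<and> f t1 \<noteq> \<infinity> \<and> f t2 \<noteq> \<infinity>")
    case False
    have "(\<forall>s < t. f s = \<infinity>) \<or> (\<forall>s > t. f s = \<infinity>)"
    proof (rule ccontr)
      assume "\<not> ?thesis"
      then obtain t1 t2 where "t1 < t" "t < t2" "f t1 \<noteq> \<infinity>" "f t2 \<noteq> \<infinity>"
        by auto
      with False show False
        by blast
    qed
    then show thesis
    proof
      assume "\<forall>s < t. f s = \<infinity>"
      then show thesis
        by (intro that(2)[of 1]) auto
    next
      assume "\<forall>s > t. f s = \<infinity>"
      then show thesis
        by (intro that(2)[of "-1"]) auto
    qed
  qed (use that(1) in blast)
  then show thesis
  proof cases
    case interior
    obtain c a where "f t = ereal c" "\<And>s. ereal (c + a * (s - t)) \<le> f s"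
      using closed_convex_ext_supporting_line[OF cvx interior] by metis
    then show thesis
      by (intro that[of c a]) auto
  next
    case endpoint
    note on_B = AE_eq_mean_at_domain_endpoint[OF B h mean fin endpoint]
    obtain c where "f t = ereal c"
      using on_B(2) closed_convex_ext_not_minf[OF cvx, of t] by (cases "f t") auto
    with on_B(1) show thesis
      by (intro that[of c 0]) (auto elim!: eventually_mono)
  qed
qed

lemma (in prob_space) real_RN_deriv:
  assumes P: "prob_space P" "sets P = sets M" "absolutely_continuous M P"
  shows "integrable M (\<lambda>x. enn2real (RN_deriv M P x))"
    and "B \<in> sets M \<Longrightarrow> (\<integral>x. enn2real (RN_deriv M P x) * indicator B x \<partial>M) = measure P B"
proof -
  define h where "h = (\<lambda>x. enn2real (RN_deriv M P x))"
  have P_eq: "emeasure P B = (\<integral>\<^sup>+x. ennreal (h x * indicator B x) \<partial>M)" if "B \<in> sets M" for B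
  proof -
    have "emeasure P B = (\<integral>\<^sup>+x. RN_deriv M P x * indicator B x \<partial>M)"
      using that by (subst density_RN_deriv[OF P(3,2), symmetric]) (simp add: emeasure_density)
    also have "\<dots> = (\<integral>\<^sup>+x. ennreal (h x * indicator B x) \<partial>M)"
      using RN_deriv_finite[OF prob_space_imp_sigma_finite[OF P(1)] P(3,2)]
      by (intro nn_integral_cong_AE) (auto elim!: eventually_mono simp: h_def indicator_def ennreal_enn2real_if)
    finally show ?thesis .
  qed
  have "integrable M h"
  proof (rule integrableI_nonneg)
    show "h \<in> borel_measurable M"
      unfolding h_def by measurable
    have "(\<integral>\<^sup>+x. ennreal (h x) \<partial>M) = emeasure P (space P)"
      using P_eq[of "space M"] sets_eq_imp_space_eq[OF P(2)] by (simp cong: nn_integral_cong)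
    then show "(\<integral>\<^sup>+x. ennreal (h x) \<partial>M) < \<infinity>"
      using prob_space.emeasure_space_1[OF P(1)] by simp
  qed (simp add: h_def)
  then show "integrable M (\<lambda>x. enn2real (RN_deriv M P x))"
    by (simp add: h_def)
  show "(\<integral>x. enn2real (RN_deriv M P x) * indicator B x \<partial>M) = measure P B" if B: "B \<in> sets M"
  proof -
    have "emeasure P B = ennreal (\<integral>x. h x * indicator B x \<partial>M)"
      using integrable_real_mult_indicator[OF B \<open>integrable M h\<close>] P_eq[OF B]
      by (subst nn_integral_eq_integral[symmetric]) (auto simp: h_def)
    then have "measure P B = (\<integral>x. h x * indicator B x \<partial>M)"
      by (intro measure_eq_emeasure_eq_ennreal integral_nonneg_AE) (auto simp: h_def)
    then show ?thesis
      by (simp add: h_def)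
  qed
qed

lemma (in prob_space) bin_div_le_fdiv:
  assumes cvx: "closed_convex_ext f"
    and P: "prob_space P" "sets P = sets M" "absolutely_continuous M P"
    and A: "A \<in> sets M" "0 < prob A" "prob A < 1"
  shows "bin_div f (prob A) (measure P A) \<le> fdiv f P M"
proof (cases "fdiv f P M = \<infinity>")
  case False
  define h where "h = (\<lambda>x. enn2real (RN_deriv M P x))"
  have h: "integrable M h" "\<And>B. B \<in> sets M \<Longrightarrow> (\<integral>x. h x * indicator B x \<partial>M) = measure P B"
    using real_RN_deriv[OF P] by (simp_all add: h_def)
  have fdiv_eq: "fdiv f P M
      = enn2ereal (\<integral>\<^sup>+x. e2ennreal (f (h x)) \<partial>M) - enn2ereal (\<integral>\<^sup>+x. e2ennreal (- f (h x)) \<partial>M)"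
    by (simp add: fdiv_def h_def)
  have fin: "(\<integral>\<^sup>+x. e2ennreal (f (h x)) \<partial>M) < \<infinity>"
  proof (rule ccontr)
    assume "\<not> ?thesis"
    then show False
      using False unfolding fdiv_eq
      by (cases "enn2ereal (\<integral>\<^sup>+x. e2ennreal (- f (h x)) \<partial>M)") (auto simp: less_top[symmetric])
  qed
  define A' where "A' = space M - A"
  have A': "A' \<in> sets M" "prob A' = 1 - prob A" "measure P A' = 1 - measure P A"
    using A prob_space.prob_compl[OF P(1), of A] P(2) sets_eq_imp_space_eq[OF P(2)]
    by (auto simp: A'_def prob_compl)
  define z1 z2 where "z1 = measure P A / prob A" and "z2 = (1 - measure P A) / (1 - prob A)"
  have mean: "(\<integral>x. h x * indicator A x \<partial>M) = z1 * prob A"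
    "(\<integral>x. h x * indicator A' x \<partial>M) = z2 * prob A'"
    using A A' h(2) by (simp_all add: z1_def z2_def)
  obtain c1 a1 where c1: "f z1 = ereal c1"
    and le1: "AE x in M. x \<in> A \<longrightarrow> ereal (c1 + a1 * (h x - z1)) \<le> f (h x)"
    using affine_minorant_on_set[OF cvx A(1,2) h(1) fin] A(2) unfolding mean by auto
  obtain c2 a2 where c2: "f z2 = ereal c2"
    and le2: "AE x in M. x \<in> A' \<longrightarrow> ereal (c2 + a2 * (h x - z2)) \<le> f (h x)"
    using affine_minorant_on_set[OF cvx A'(1) _ h(1) fin] A A'(2) unfolding mean by auto
  define l where "l x = (c1 + a1 * (h x - z1)) * indicator A x + (c2 + a2 * (h x - z2)) * indicator A' x"
    for x
  have "has_bochner_integral M l (prob A * c1 + prob A' * c2)"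
    unfolding l_def using A(1) A'(1) h(1) mean
    by (intro has_bochner_integral_add has_bochner_integral_affine_indicator)
      (auto simp: less_top[symmetric])
  moreover have "AE x in M. ereal (l x) \<le> f (h x)"
    using le1 le2 AE_space by eventually_elim (auto simp: l_def A'_def indicator_def)
  ultimately have "ereal (prob A * c1 + prob A' * c2) \<le> fdiv f P M"
    unfolding fdiv_eq using integral_le_pos_minus_neg_nn_integral
    by (metis has_bochner_integral_iff)
  then show ?thesis
    using c1 c2 A'(2) by (simp add: bin_div_def z1_def z2_def)
qed simp

lemma (in prob_space) ge_of_fdiv_le:
  assumes cvx: "closed_convex_ext f" and f1: "f 1 = 0" and \<alpha>: "0 < \<alpha>" "\<alpha> < 1" and \<rho>: "0 \<le> \<rho>"
    and P: "prob_space P" "sets P = sets M" "absolutely_continuous M P" and fd: "fdiv f P M \<le> ereal \<rho>"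
    and A: "A \<in> sets M" "g_inv f \<rho> \<alpha> \<le> prob A"
  shows "\<alpha> \<le> measure P A"
proof (cases "prob A < 1")
  case True
  have "0 < prob A"
    using le_g_inv[of f \<alpha> \<rho>, OF f1 \<alpha> \<rho>] \<alpha> A(2) by linarith
  then have "bin_div f (prob A) (measure P A) \<le> ereal \<rho>"
    using bin_div_le_fdiv[OF cvx P A(1) _ True] fd by simp
  then show ?thesis
    using ge_of_bin_div_le[OF cvx f1 \<alpha> \<rho> A(2) True] prob_space.prob_le_1[OF P(1)] by simp
next
  case False
  then have "prob (space M - A) = 0"
    using A(1) prob_compl[of A] prob_le_1[of A] by simp
  then have "space P - A \<in> null_sets P"
    using A(1) P(3) sets_eq_imp_space_eq[OF P(2)]
    by (auto simp: absolutely_continuous_def null_sets_def emeasure_eq_measure)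
  then have "measure P A = 1"
    using prob_space.prob_compl[OF P(1), of A] A(1) P(2) by (simp add: measure_def null_sets_def)
  then show ?thesis
    using \<alpha> by simp
qed

subsection \<open>Two-valued densities\<close>

lemma (in sigma_finite_measure) fdiv_density:
  assumes g: "g \<in> borel_measurable M" "\<And>x. 0 \<le> g x"
  shows "fdiv f (density M (\<lambda>x. ennreal (g x))) M
    = enn2ereal (\<integral>\<^sup>+x. e2ennreal (f (g x)) \<partial>M) - enn2ereal (\<integral>\<^sup>+x. e2ennreal (- f (g x)) \<partial>M)"
proof -
  have "AE x in M. ennreal (g x) = RN_deriv M (density M (\<lambda>x. ennreal (g x))) x"
    using g(1) by (intro RN_deriv_unique) auto
  then have "AE x in M. enn2real (RN_deriv M (density M (\<lambda>x. ennreal (g x))) x) = g x"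
    by eventually_elim (metis enn2real_ennreal g(2))
  then have RN: "(\<integral>\<^sup>+x. e2ennreal (F (enn2real (RN_deriv M (density M (\<lambda>x. ennreal (g x))) x))) \<partial>M)
      = (\<integral>\<^sup>+x. e2ennreal (F (g x)) \<partial>M)" for F :: "real \<Rightarrow> ereal"
    by (intro nn_integral_cong_AE) (auto elim!: eventually_mono)
  show ?thesis
    unfolding fdiv_def RN[of f] RN[of "\<lambda>t. - f t"] ..
qed

lemma enn2ereal_pos_part_minus_neg_part:
  fixes u v p q :: real
  assumes "0 \<le> p" "0 \<le> q"
  shows "enn2ereal (ennreal u * ennreal p + ennreal v * ennreal q)
      - enn2ereal (ennreal (- u) * ennreal p + ennreal (- v) * ennreal q) = ereal (p * u + q * v)"
proof -
  have pos_part: "ennreal x * ennreal y = ennreal (max x 0 * y)" if "0 \<le> y" for x y :: real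
    using that by (cases "0 \<le> x") (auto simp: ennreal_mult'' ennreal_neg)
  have sum: "ennreal x * ennreal p + ennreal y * ennreal q = ennreal (max x 0 * p + max y 0 * q)"
    for x y :: real
    unfolding pos_part[OF assms(1)] pos_part[OF assms(2)] using assms by (simp add: ennreal_plus)
  have "max u 0 * p + max v 0 * q - (max (- u) 0 * p + max (- v) 0 * q) = p * u + q * v"
    by (cases "0 \<le> u"; cases "0 \<le> v") (simp_all add: algebra_simps)
  then show ?thesis
    unfolding sum using assms by (subst (1 2) enn2ereal_ennreal) simp_all
qed

lemma (in prob_space) two_valued_density:
  assumes A: "A \<in> sets M" and c: "0 \<le> c1" "0 \<le> c2" "c1 * prob A + c2 * (1 - prob A) = 1"
    and fin: "f c1 = ereal u" "f c2 = ereal v"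
  defines "P \<equiv> density M (\<lambda>x. ennreal (c1 * indicator A x + c2 * indicator (space M - A) x))"
  shows "prob_space P" "absolutely_continuous M P" "measure P A = c1 * prob A"
    and "fdiv f P M = ereal (prob A * u + (1 - prob A) * v)"
proof -
  define g where "g = (\<lambda>x. c1 * indicator A x + c2 * indicator (space M - A) x)"
  have g: "g \<in> borel_measurable M" "\<And>x. 0 \<le> g x"
    using A unfolding g_def by measurable (use c in auto)
  have integral_g: "(\<integral>\<^sup>+x. G (g x) \<partial>M) = G c1 * ennreal (prob A) + G c2 * ennreal (1 - prob A)"
    for G :: "real \<Rightarrow> ennreal"
  proof -
    have "(\<integral>\<^sup>+x. G (g x) \<partial>M) = (\<integral>\<^sup>+x. G c1 * indicator A x + G c2 * indicator (space M - A) x \<partial>M)"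
      by (intro nn_integral_cong) (auto simp: g_def indicator_def)
    then show ?thesis
      using A by (simp add: nn_integral_add nn_integral_cmult_indicator emeasure_eq_measure prob_compl)
  qed
  have P_def': "P = density M (\<lambda>x. ennreal (g x))"
    by (simp add: P_def g_def)
  have "emeasure P (space P) = ennreal c1 * ennreal (prob A) + ennreal c2 * ennreal (1 - prob A)"
    unfolding P_def' using g integral_g[of ennreal]
    by (simp add: emeasure_density cong: nn_integral_cong)
  also have "\<dots> = 1"
    using c prob_le_1[of A] by (simp add: ennreal_mult''[symmetric] ennreal_plus[symmetric])
  finally show "prob_space P"
    by (rule prob_spaceI)
  show "absolutely_continuous M P"
    unfolding P_def' using g(1) by (intro absolutely_continuousI_density) measurable
  have "emeasure P A = (\<integral>\<^sup>+x. ennreal c1 * indicator A x \<partial>M)"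
    unfolding P_def' using A g(1)
    by (simp add: emeasure_density) (intro nn_integral_cong, simp add: g_def indicator_def)
  also have "\<dots> = ennreal (c1 * prob A)"
    using A c by (simp add: nn_integral_cmult_indicator emeasure_eq_measure ennreal_mult)
  finally show "measure P A = c1 * prob A"
    using c by (intro measure_eq_emeasure_eq_ennreal) auto
  show "fdiv f P M = ereal (prob A * u + (1 - prob A) * v)"
    unfolding P_def' fdiv_density[OF g] integral_g[of "\<lambda>t. e2ennreal (f t)"]
      integral_g[of "\<lambda>t. e2ennreal (- f t)"] fin
    using prob_le_1[of A] by (simp add: enn2ereal_pos_part_minus_neg_part)
qed

subsection \<open>Quantiles over the f-divergence ball\<close>

lemma quantile_cdf_mono:
  assumes "\<And>q. \<gamma> \<le> G q \<Longrightarrow> \<beta> \<le> F q"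
  shows "quantile_cdf F \<beta> \<le> quantile_cdf G \<gamma>"
  unfolding quantile_cdf_def using assms by (intro Inf_superset_mono) auto

lemma quantile_cdf_le_of_less:
  assumes "\<And>q. F q < \<beta> \<Longrightarrow> ereal q \<le> y"
  shows "quantile_cdf F \<beta> \<le> y"
proof (rule dense_le)
  fix y' assume y': "y' < quantile_cdf F \<beta>"
  show "y' \<le> y"
  proof (cases y')
    case (real q)
    have "F q < \<beta>"
    proof (rule ccontr)
      assume "\<not> F q < \<beta>"
      then have "quantile_cdf F \<beta> \<le> ereal q"
        unfolding quantile_cdf_def by (intro Inf_lower) auto
      then show False
        using y' real by simp
    qed
    then show ?thesis
      using assms real by simp
  qed (use y' in auto)
qed

lemma le_quantile:
  assumes "finite_measure M" "sets M = sets borel" "measure M {..q} < \<beta>"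
  shows "ereal q \<le> quantile M \<beta>"
  unfolding quantile_def quantile_cdf_def
proof (rule Inf_greatest)
  fix y assume "y \<in> ereal ` {q'. \<beta> \<le> measure M {..q'}}"
  then obtain q' where q': "y = ereal q'" "\<beta> \<le> measure M {..q'}"
    by auto
  have "q \<le> q'"
  proof (rule ccontr)
    assume "\<not> q \<le> q'"
    then have "measure M {..q'} \<le> measure M {..q}"
      using assms(1,2) by (intro finite_measure.finite_measure_mono) auto
    then show False
      using assms(3) q'(2) by simp
  qed
  then show "ereal q \<le> y"
    using q'(1) by simp
qed

definition min_cdf :: "nat \<Rightarrow> (nat \<Rightarrow> real measure) \<Rightarrow> real \<Rightarrow> real" where
  "min_cdf d P x = Min ((\<lambda>i. measure (P i) {..x}) ` {..<d})"

lemma min_cdf_le: "i < d \<Longrightarrow> min_cdf d P x \<le> measure (P i) {..x}"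
  unfolding min_cdf_def by (intro Min_le) auto

lemma min_cdf_attained:
  assumes "0 < d"
  obtains i where "i < d" "min_cdf d P x = measure (P i) {..x}"
proof -
  have "min_cdf d P x \<in> (\<lambda>i. measure (P i) {..x}) ` {..<d}"
    unfolding min_cdf_def using assms by (intro Min_in) auto
  then show thesis
    using that by auto
qed

lemma min_cdf_le_mixture:
  assumes P: "\<And>i. i < d \<Longrightarrow> prob_space (P i)" "\<And>i. i < d \<Longrightarrow> sets (P i) = sets borel"
    and lam: "\<And>i. i < d \<Longrightarrow> 0 \<le> lam i" "(\<Sum>i<d. lam i) = 1"
  shows "min_cdf d P x \<le> measure (mixture d lam P) {..x}"
proof -
  have "min_cdf d P x = (\<Sum>i<d. lam i * min_cdf d P x)"
    using lam(2) by (simp add: sum_distrib_right[symmetric])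
  also have "\<dots> \<le> (\<Sum>i<d. lam i * measure (P i) {..x})"
    using lam(1) by (intro sum_mono mult_left_mono min_cdf_le) auto
  also have "\<dots> = measure (mixture d lam P) {..x}"
    using measure_mixture[OF P lam(1)] by simp
  finally show ?thesis .
qed

lemma quantile_le_of_mem_P_ball:
  assumes P: "\<And>i. i < d \<Longrightarrow> prob_space (P i)" "\<And>i. i < d \<Longrightarrow> sets (P i) = sets borel"
    and cvx: "closed_convex_ext f" and f1: "f 1 = 0" and \<alpha>: "0 < \<alpha>" "\<alpha> < 1" and \<rho>: "0 \<le> \<rho>"
    and P': "P' \<in> P_ball f \<rho> d P"
  shows "quantile P' \<alpha> \<le> quantile_cdf (min_cdf d P) (g_inv f \<rho> \<alpha>)"
proof -
  obtain lam where P'_prob: "prob_space P'" "sets P' = sets borel"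
    and lam: "\<And>i. i < d \<Longrightarrow> 0 \<le> lam i" "(\<Sum>i<d. lam i) = 1"
    and ac: "absolutely_continuous (mixture d lam P) P'" and fd: "fdiv f P' (mixture d lam P) \<le> ereal \<rho>"
    using P' unfolding P_ball_def conv_hull_meas_def by blast
  interpret S0: prob_space "mixture d lam P"
    using P lam by (rule prob_space_mixture)
  have "\<alpha> \<le> measure P' {..q}" if "g_inv f \<rho> \<alpha> \<le> min_cdf d P q" for q
    using S0.ge_of_fdiv_le[OF cvx f1 \<alpha> \<rho> P'_prob(1) _ ac fd, of "{..q}"] P'_prob(2)
      min_cdf_le_mixture[of d P lam q, OF P lam] that by simp
  then show ?thesis
    unfolding quantile_def by (rule quantile_cdf_mono)
qed

lemma mem_P_ball_measure_lessE:
  assumes P: "\<And>i. i < d \<Longrightarrow> prob_space (P i)" "\<And>i. i < d \<Longrightarrow> sets (P i) = sets borel"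
    and cvx: "closed_convex_ext f" and f1: "f 1 = 0" and \<alpha>: "0 < \<alpha>" "\<alpha> < 1" and \<rho>: "0 \<le> \<rho>"
    and i: "i < d" "measure (P i) {..q} < g_inv f \<rho> \<alpha>"
  obtains P' where "P' \<in> P_ball f \<rho> d P" "measure P' {..q} < \<alpha>"
proof -
  define Q where "Q = mixture d (\<lambda>j. of_bool (j = i)) P"
  have Q_mem: "Q \<in> conv_hull_meas d P"
    using i unfolding conv_hull_meas_def Q_def by auto
  interpret Q: prob_space Q
    unfolding Q_def using i by (intro prob_space_mixture[OF P]) auto
  define b where "b = Q.prob {..q}"
  have "b = measure (P i) {..q}"
    unfolding b_def Q_def using measure_mixture[of d P "\<lambda>j. of_bool (j = i)" "{..q}"] P i by simp
  then have b: "0 \<le> b" "b < g_inv f \<rho> \<alpha>"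
    using i by auto
  obtain c1 c2 u v where c: "0 \<le> c1" "0 \<le> c2" "c1 * b + c2 * (1 - b) = 1"
    and uv: "f c1 = ereal u" "f c2 = ereal v" "b * u + (1 - b) * v \<le> \<rho>" and small: "c1 * b < \<alpha>"
    using less_g_inv_density_levelsE[of f \<alpha> \<rho> b, OF cvx f1 \<alpha> \<rho> b] .
  define P' where "P' = density Q (\<lambda>x. ennreal (c1 * indicator {..q} x + c2 * indicator (space Q - {..q}) x))"
  have "{..q} \<in> Q.events"
    by (simp add: Q_def)
  note P'_facts = Q.two_valued_density[OF this c(1,2) c(3)[unfolded b_def] uv(1,2), folded P'_def]
  have "P' \<in> P_ball f \<rho> d P"
    unfolding P_ball_def
  proof (intro CollectI conjI bexI)
    show "sets P' = sets borel"
      by (simp add: P'_def Q_def)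
    show "fdiv f P' Q \<le> ereal \<rho>"
      using P'_facts(4) uv(3) by (simp add: b_def)
  qed (use P'_facts Q_mem in auto)
  moreover have "measure P' {..q} < \<alpha>"
    using P'_facts small by (simp add: b_def)
  ultimately show thesis
    by (rule that)
qed

lemma quantile_cdf_min_cdf_le_SUP_quantile:
  assumes P: "\<And>i. i < d \<Longrightarrow> prob_space (P i)" "\<And>i. i < d \<Longrightarrow> sets (P i) = sets borel"
    and d: "0 < d" and cvx: "closed_convex_ext f" and f1: "f 1 = 0" and \<alpha>: "0 < \<alpha>" "\<alpha> < 1"
    and \<rho>: "0 \<le> \<rho>"
  shows "quantile_cdf (min_cdf d P) (g_inv f \<rho> \<alpha>) \<le> (SUP P' \<in> P_ball f \<rho> d P. quantile P' \<alpha>)"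
proof (rule quantile_cdf_le_of_less)
  fix q assume q: "min_cdf d P q < g_inv f \<rho> \<alpha>"
  obtain i where "i < d" "min_cdf d P q = measure (P i) {..q}"
    using min_cdf_attained[OF d] .
  then obtain P' where P': "P' \<in> P_ball f \<rho> d P" "measure P' {..q} < \<alpha>"
    using mem_P_ball_measure_lessE[of d P f \<alpha> \<rho> i q, OF P cvx f1 \<alpha> \<rho>] q by auto
  then have "prob_space P'" "sets P' = sets borel"
    by (simp_all add: P_ball_def)
  then have "ereal q \<le> quantile P' \<alpha>"
    using P'(2) by (intro le_quantile prob_space.finite_measure)
  also have "\<dots> \<le> (SUP P' \<in> P_ball f \<rho> d P. quantile P' \<alpha>)"
    using P'(1) by (rule SUP_upper)
  finally show "ereal q \<le> (SUP P' \<in> P_ball f \<rho> d P. quantile P' \<alpha>)" .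
qed

theorem theorem6:
  fixes M :: "('x \<times> 'y) measure" and s :: "'x \<times> 'y \<Rightarrow> real"
    and S :: "nat \<Rightarrow> ('x \<times> 'y) measure" and d :: nat
    and f :: "real \<Rightarrow> ereal" and \<rho> :: real and \<alpha> :: real
  assumes "s \<in> borel_measurable M"
    and "d \<ge> 1"
    and "\<And>i. i < d \<Longrightarrow> prob_space (S i)"
    and "\<And>i. i < d \<Longrightarrow> sets (S i) = sets M"
    and "closed_convex_ext f" and "f 1 = 0" and "\<And>t. t < 0 \<Longrightarrow> f t = \<infinity>"
    and "\<rho> > 0"
    and "0 < \<alpha>" and "\<alpha> < 1"
  shows "(SUP P \<in> P_ball f \<rho> d (\<lambda>i. distr (S i) borel s). quantile P \<alpha>)
       = quantile_cdf (\<lambda>x. Min ((\<lambda>i. measure (distr (S i) borel s) {..x}) ` {..<d}))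
           (g_inv f \<rho> \<alpha>)"
proof -
  define P where "P = (\<lambda>i. distr (S i) borel s)"
  have P: "\<And>i. i < d \<Longrightarrow> prob_space (P i)" "\<And>i. i < d \<Longrightarrow> sets (P i) = sets borel"
    using assms(1,3,4) by (auto simp: P_def cong: measurable_cong_sets intro!: prob_space.prob_space_distr)
  have "(SUP P' \<in> P_ball f \<rho> d P. quantile P' \<alpha>) = quantile_cdf (min_cdf d P) (g_inv f \<rho> \<alpha>)"
    using P assms(2,5,6,8-10)
    by (intro antisym SUP_least quantile_le_of_mem_P_ball quantile_cdf_min_cdf_le_SUP_quantile) auto
  then show ?thesis
    unfolding P_def min_cdf_def[abs_def] by simp
qed

end
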